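(* Let $n\ge 1$ and $1<k\le 2n$. Suppose that for every 1D array of size $n$ there is an $S(n,k)$-bit encoding from which sorted 1-sided Top-$k$ queries can be answered. Then every $2\times n$ array $A$ admits an encoding of $2S(n,k)+\lceil 2n\lg 3\rceil+o(n)$ bits from which every sorted 3-sided Top-$k$ query on $A$ can be answered.
   Context: All arrays have pairwise distinct entries from a totally ordered set. For a 1D array $B[1..n]$ and $1\le i\le j\le n$, the query Top-$k(i,j,B)$ returns the positions of the $k$ largest values of $B[i..j]$ (all positions of $B[i..j]$ if it has at most $k$ entries); a query is sorted if the positions must be reported in decreasing order of their values, unsorted if in any order; 1-sided queries are those with $i=1$, 2-sided queries allow arbitrary $i\le j$. For an $m\times n$ array $A$, Top-$k(i,j,a,b,A)$ (with $1\le i\le j\le m$, $1\le a\le b\le n$) returns the positions of the $k$ largest values in the subarray $A[i..j][a..b]$; 3-sided queries are those with $a=1$, 4-sided queries allow arbitrary $a\le b$. An $s$-bit encoding supporting a family of queries is a map assigning to each array a bit string of length at most $s$ such that every query of the family can be answered from this bit string alone, without access to the array. *)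

theory Defs
  imports Complex_Main "HOL-Library.Landau_Symbols" "HOL-Library.Product_Lexorder"
begin

definition top_k :: "nat \<Rightarrow> ('p::linorder \<Rightarrow> 'a::linorder) \<Rightarrow> 'p set \<Rightarrow> 'p list" where
  "top_k k f P = take k (rev (sort_key f (sorted_list_of_set P)))"

definition arrays1 :: "nat \<Rightarrow> (nat \<Rightarrow> 'a) set" where
  "arrays1 n = {B. inj_on B {1..n}}"

text \<open>m x n arrays A[1..m][1..n] (A i j = entry in row i, column j), distinct entries.\<close>
definition arrays2 :: "nat \<Rightarrow> nat \<Rightarrow> (nat \<Rightarrow> nat \<Rightarrow> 'a) set" where
  "arrays2 m n = {A. inj_on (\<lambda>(i, j). A i j) ({1..m} \<times> {1..n})}"

definition has_encoding :: "'x set \<Rightarrow> 'q set \<Rightarrow> ('x \<Rightarrow> 'q \<Rightarrow> 'r) \<Rightarrow> real \<Rightarrow> bool" where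
  "has_encoding X Q ans s \<longleftrightarrow>
     (\<exists>(E :: 'x \<Rightarrow> bool list) (D :: bool list \<Rightarrow> 'q \<Rightarrow> 'r).
        \<forall>x\<in>X. real (length (E x)) \<le> s \<and> (\<forall>q\<in>Q. D (E x) q = ans x q))"

definition enc_1sided :: "nat \<Rightarrow> nat \<Rightarrow> real \<Rightarrow> 'a::linorder itself \<Rightarrow> bool" where
  "enc_1sided n k s _ = has_encoding (arrays1 n :: (nat \<Rightarrow> 'a) set) {1..n}
      (\<lambda>B j. top_k k B {1..j}) s"

definition enc_3sided :: "nat \<Rightarrow> nat \<Rightarrow> nat \<Rightarrow> real \<Rightarrow> 'a::linorder itself \<Rightarrow> bool" where
  "enc_3sided m n k s _ = has_encoding (arrays2 m n :: (nat \<Rightarrow> nat \<Rightarrow> 'a) set)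
      {(i, j, b). 1 \<le> i \<and> i \<le> j \<and> j \<le> m \<and> 1 \<le> b \<and> b \<le> n}
      (\<lambda>A (i, j, b). top_k k (\<lambda>(r, c). A r c) ({i..j} \<times> {1..b})) s"

end

theory Submission
  imports Defs "HOL-Library.FuncSet" "HOL-Real_Asymp.Real_Asymp"
begin

text \<open>Each row is stored by its 1-sided encoding. A query \<open>Top-k(1,2,1,b)\<close> only returns
  \<^emph>\<open>candidates\<close>, the positions occurring in the answer to some such query. Every candidate
  lies in the top-k of a prefix of its own row, so the 1-sided answers fix the order of any
  two candidates in the same row; the order of all candidates is then determined by the
  sequence of rows of the candidates listed in increasing order of value, as a merge of
  sorted lists is determined by its merge pattern. The candidate set and this sequence fit
  in one trit per position, because ranking the candidates by position maps them
  bijectively onto the indices of the sequence. Single-row queries are 1-sided queries.\<close>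

section \<open>Top-k answers\<close>

lemma sorted_wrt_rev_sort_key:
  assumes "finite X" "inj_on f X"
  shows "sorted_wrt (\<lambda>a b. f b < f a) (rev (sort_key f (sorted_list_of_set X)))"
proof -
  have "distinct (map f (sort_key f (sorted_list_of_set X)))"
    using assms by (simp add: distinct_map)
  then have "sorted_wrt (<) (map f (sort_key f (sorted_list_of_set X)))"
    using sorted_sort_key strict_sorted_iff by blast
  then show ?thesis by (simp add: sorted_wrt_map sorted_wrt_rev)
qed

lemma distinct_top_k: "finite X \<Longrightarrow> distinct (top_k k f X)"
  by (simp add: top_k_def)

lemma set_top_k_subset: "set (top_k k f X) \<subseteq> X"
  by (cases "finite X") (auto simp: top_k_def dest: in_set_takeD)

lemma length_top_k: "finite X \<Longrightarrow> length (top_k k f X) = min k (card X)"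
  by (simp add: top_k_def length_sort flip: distinct_card)

lemma sorted_wrt_top_k:
  "finite X \<Longrightarrow> inj_on f X \<Longrightarrow> sorted_wrt (\<lambda>a b. f b < f a) (top_k k f X)"
  unfolding top_k_def using sorted_wrt_rev_sort_key sorted_wrt_take by blast

lemma top_k_dominates:
  assumes "finite X" "inj_on f X" "x \<in> set (top_k k f X)" "y \<in> X - set (top_k k f X)"
  shows "f y < f x"
proof -
  define R where "R = rev (sort_key f (sorted_list_of_set X))"
  have sorted: "sorted_wrt (\<lambda>a b. f b < f a) (take k R @ drop k R)"
    using sorted_wrt_rev_sort_key[OF assms(1,2)] by (simp add: R_def)
  have "set R = X" using assms(1) by (simp add: R_def)
  then have "x \<in> set (take k R)" "y \<in> set (drop k R)"
    using assms(3,4) set_append[of "take k R" "drop k R"] by (auto simp: R_def top_k_def)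
  then show ?thesis using sorted unfolding sorted_wrt_append by blast
qed

lemma top_k_unique:
  assumes fin: "finite X" and inj: "inj_on f X"
    and L: "distinct L" "set L \<subseteq> X" "length L = min k (card X)"
      "sorted_wrt (\<lambda>a b. f b < f a) L" "\<forall>x\<in>set L. \<forall>y\<in>X - set L. f y < f x"
  shows "L = top_k k f X"
proof -
  let ?T = "top_k k f X"
  have card_eq: "card (set L) = card (set ?T)"
    using L(1,3) fin by (simp add: distinct_card length_top_k distinct_top_k)
  have set_eq: "set L = set ?T"
  proof (rule ccontr)
    assume "set L \<noteq> set ?T"
    then obtain x y where "x \<in> set L" "x \<notin> set ?T" "y \<in> set ?T" "y \<notin> set L"
      using card_eq by (metis card_subset_eq finite_set subsetI)
    then have "f y < f x" "f x < f y"
      using L(2,5) top_k_dominates[OF fin inj] set_top_k_subset by blast+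
    then show False by simp
  qed
  have "sorted_wrt (<) (rev (map f L))" "sorted_wrt (<) (rev (map f ?T))"
    using L(4) sorted_wrt_top_k[OF fin inj] by (simp_all add: sorted_wrt_map sorted_wrt_rev)
  then have "map f L = map f ?T"
    using strict_sorted_equal set_eq by (metis rev_swap set_map set_rev)
  moreover have "inj_on f (set L \<union> set ?T)"
    using inj L(2) set_top_k_subset by (blast intro: inj_on_subset)
  ultimately show ?thesis using inj_on_map_eq_map by blast
qed

lemma mem_top_k_iff:
  assumes fin: "finite X" and inj: "inj_on f X"
  shows "x \<in> set (top_k k f X) \<longleftrightarrow> x \<in> X \<and> card {y\<in>X. f x < f y} < k"
proof
  let ?T = "top_k k f X"
  assume x: "x \<in> set ?T"
  have "{y\<in>X. f x < f y} \<subseteq> set ?T - {x}"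
    using top_k_dominates[OF fin inj x] by fastforce
  then have "card {y\<in>X. f x < f y} \<le> card (set ?T - {x})"
    by (intro card_mono) simp_all
  also have "\<dots> = length ?T - 1"
    using x distinct_top_k[OF fin, of k f] by (simp add: distinct_card)
  also have "\<dots> < k"
    using x length_top_k[OF fin, of k f] by (cases "length ?T") auto
  finally show "x \<in> X \<and> card {y\<in>X. f x < f y} < k"
    using x set_top_k_subset by blast
next
  let ?T = "top_k k f X"
  assume x: "x \<in> X \<and> card {y\<in>X. f x < f y} < k"
  show "x \<in> set ?T"
  proof (rule ccontr)
    assume x_out: "x \<notin> set ?T"
    then have "set ?T \<subseteq> {y\<in>X. f x < f y}"
      using x top_k_dominates[OF fin inj] set_top_k_subset by blast
    then have "card (set ?T) \<le> card {y\<in>X. f x < f y}"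
      using fin by (intro card_mono) simp_all
    then have "card (set ?T) < k" using x by linarith
    then have "card (set ?T) = card X"
      using length_top_k[OF fin, of k f] distinct_top_k[OF fin, of k f] by (simp add: distinct_card)
    then have "set ?T = X"
      using fin set_top_k_subset by (metis card_subset_eq)
    then show False using x x_out by blast
  qed
qed

lemma mem_top_k_subset:
  assumes "finite X" "inj_on f X" "Y \<subseteq> X" "x \<in> Y" "x \<in> set (top_k k f X)"
  shows "x \<in> set (top_k k f Y)"
proof -
  have "card {y\<in>Y. f x < f y} \<le> card {y\<in>X. f x < f y}"
    using assms(1,3) by (intro card_mono) auto
  moreover have "finite Y" "inj_on f Y"
    using assms(1-3) finite_subset inj_on_subset by blast+
  ultimately show ?thesis
    using assms(4,5) mem_top_k_iff[OF assms(1,2)] mem_top_k_iff[of Y f] by fastforce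
qed

lemma top_k_subset_eq:
  assumes fin: "finite X" and inj: "inj_on f X"
    and Y: "set (top_k k f X) \<subseteq> Y" "Y \<subseteq> X"
  shows "top_k k f Y = top_k k f X"
proof -
  let ?T = "top_k k f X"
  have finY: "finite Y" using fin Y(2) finite_subset by blast
  have "length ?T = min k (card Y)"
  proof (cases "card X \<le> k")
    case True
    then have "set ?T = X"
      using length_top_k[OF fin] distinct_top_k[OF fin, of k f] set_top_k_subset fin
      by (metis card_subset_eq distinct_card min_absorb2)
    then show ?thesis using True Y length_top_k[OF fin, of k f] by auto
  next
    case False
    then have "k \<le> card Y"
      using length_top_k[OF fin] distinct_top_k[OF fin, of k f] Y(1) finY
      by (metis card_mono distinct_card min_def nle_le)
    then show ?thesis using False length_top_k[OF fin, of k f] by simp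
  qed
  then have "?T = top_k k f Y"
    using top_k_unique[OF finY inj_on_subset[OF inj Y(2)]] distinct_top_k[OF fin, of k f] Y
      sorted_wrt_top_k[OF fin inj] top_k_dominates[OF fin inj] by blast
  then show ?thesis by simp
qed

lemma top_k_cong:
  assumes fin: "finite X" and inj: "inj_on f X" "inj_on g X"
    and less_iff: "\<And>x y. x \<in> X \<Longrightarrow> y \<in> X \<Longrightarrow> f x < f y \<longleftrightarrow> g x < g y"
  shows "top_k k f X = top_k k g X"
proof (rule top_k_unique[OF fin inj(2)])
  let ?T = "top_k k f X"
  show "distinct ?T" "set ?T \<subseteq> X" "length ?T = min k (card X)"
    using fin by (simp_all add: distinct_top_k set_top_k_subset length_top_k)
  have T_sub: "set ?T \<subseteq> X" by (rule set_top_k_subset)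
  show "sorted_wrt (\<lambda>a b. g b < g a) ?T"
    by (rule sorted_wrt_mono_rel[OF _ sorted_wrt_top_k[OF fin inj(1)]])
      (use T_sub less_iff in blast)
  show "\<forall>x\<in>set ?T. \<forall>y\<in>X - set ?T. g y < g x"
  proof (intro ballI)
    fix x y assume "x \<in> set ?T" "y \<in> X - set ?T"
    then show "g y < g x"
      using top_k_dominates[OF fin inj(1)] less_iff T_sub by blast
  qed
qed

lemma less_iff_of_top_k_eq:
  assumes fin: "finite X" and inj: "inj_on f X" "inj_on g X"
    and eq: "top_k k f X = top_k k g X" and x: "x \<in> set (top_k k f X)" and y: "y \<in> X"
  shows "f x < f y \<longleftrightarrow> g x < g y"
proof (cases "y \<in> set (top_k k f X)")
  case False
  then show ?thesis
    using top_k_dominates[OF fin inj(1) x] top_k_dominates[OF fin inj(2)] x y eq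
    by (metis DiffI less_asym)
next
  case True
  let ?T = "top_k k f X"
  obtain i j where "i < length ?T" "?T ! i = x" "j < length ?T" "?T ! j = y"
    using x True by (meson in_set_conv_nth)
  moreover have "sorted_wrt (\<lambda>a b. f b < f a) ?T"
    using sorted_wrt_top_k[OF fin inj(1)] .
  moreover have "sorted_wrt (\<lambda>a b. g b < g a) ?T"
    using sorted_wrt_top_k[OF fin inj(2), of k] by (simp only: eq)
  ultimately show ?thesis
    by (cases i j rule: linorder_cases) (auto simp: sorted_wrt_iff_nth_less dest: order.asym)
qed

lemma top_k_Times_singleton:
  fixes A :: "'r::linorder \<Rightarrow> 'c::linorder \<Rightarrow> 'a::linorder"
  assumes fin: "finite X" and inj: "inj_on (A r) X"
  shows "top_k k (case_prod A) ({r} \<times> X) = map (Pair r) (top_k k (A r) X)"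
proof (rule top_k_unique[symmetric])
  let ?T = "top_k k (A r) X"
  show "finite ({r} \<times> X)" "inj_on (case_prod A) ({r} \<times> X)"
    using fin inj by (auto simp: inj_on_def)
  show "distinct (map (Pair r) ?T)" "set (map (Pair r) ?T) \<subseteq> {r} \<times> X"
    using distinct_top_k[OF fin, of k "A r"] set_top_k_subset[of k "A r" X]
    by (auto simp: distinct_map inj_on_def)
  show "length (map (Pair r) ?T) = min k (card ({r} \<times> X))"
    using length_top_k[OF fin] by (simp add: card_cartesian_product_singleton)
  show "sorted_wrt (\<lambda>a b. case_prod A b < case_prod A a) (map (Pair r) ?T)"
    using sorted_wrt_top_k[OF fin inj] by (simp add: sorted_wrt_map)
  show "\<forall>x\<in>set (map (Pair r) ?T). \<forall>y\<in>{r} \<times> X - set (map (Pair r) ?T).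
      case_prod A y < case_prod A x"
    using top_k_dominates[OF fin inj] by auto
qed

lemma less_iff_of_prefix_top_k_eq:
  fixes B B' :: "nat \<Rightarrow> 'a::linorder"
  assumes inj: "inj_on B {1..n}" "inj_on B' {1..n}"
    and prefix: "\<And>j. j \<in> {1..n} \<Longrightarrow> top_k k B {1..j} = top_k k B' {1..j}"
    and c: "b \<in> {1..n}" "c \<in> set (top_k k B {1..b})"
    and c': "b' \<in> {1..n}" "c' \<in> set (top_k k B {1..b'})"
  shows "B c < B c' \<longleftrightarrow> B' c < B' c'"
proof -
  have inj_prefix: "inj_on B {1..j}" "inj_on B' {1..j}" if "j \<in> {1..n}" for j
    using inj that by (auto intro: inj_on_subset)
  have c_in: "c \<in> {1..b}" and c'_in: "c' \<in> {1..b'}"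
    using c(2) c'(2) set_top_k_subset by blast+
  show ?thesis
  proof (cases "c' \<le> b")
    case True
    then show ?thesis
      using less_iff_of_top_k_eq[OF _ inj_prefix[OF c(1)] prefix[OF c(1)] c(2)] c'_in by simp
  next
    case False
    then have "c \<in> {1..b'}" "c \<noteq> c'" using c_in c'_in by auto
    moreover have "B c \<noteq> B c'" "B' c \<noteq> B' c'"
      using \<open>c \<in> {1..b'}\<close> \<open>c \<noteq> c'\<close> c'_in inj_prefix[OF c'(1)] by (auto dest: inj_onD)
    ultimately show ?thesis
      using less_iff_of_top_k_eq[OF _ inj_prefix[OF c'(1)] prefix[OF c'(1)] c'(2), of c]
      by auto
  qed
qed

section \<open>Ranks and merge patterns\<close>

definition rank :: "('p \<Rightarrow> 'b::linorder) \<Rightarrow> 'p set \<Rightarrow> 'p \<Rightarrow> nat" where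
  "rank f E e = card {e'\<in>E. f e' < f e}"

text \<open>The labels of the elements of \<open>E\<close>, listed in increasing order of \<open>f\<close>.\<close>
definition interleaving :: "('p \<Rightarrow> 'b::linorder) \<Rightarrow> 'p set \<Rightarrow> ('p \<Rightarrow> 'l) \<Rightarrow> nat \<Rightarrow> 'l" where
  "interleaving f E lab i = lab (inv_into E (rank f E) i)"

lemma rank_less_iff:
  assumes "finite E" "x \<in> E" "y \<in> E"
  shows "rank f E x < rank f E y \<longleftrightarrow> f x < f y"
proof
  assume "f x < f y"
  then have "{e\<in>E. f e < f x} \<subset> {e\<in>E. f e < f y}" using assms(2) by auto
  then show "rank f E x < rank f E y" unfolding rank_def using assms(1) by (simp add: psubset_card_mono)
next
  assume less: "rank f E x < rank f E y"
  show "f x < f y"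
  proof (rule ccontr)
    assume "\<not> f x < f y"
    then have "{e\<in>E. f e < f y} \<subseteq> {e\<in>E. f e < f x}" by auto
    then have "rank f E y \<le> rank f E x" unfolding rank_def using assms(1) by (simp add: card_mono)
    then show False using less by simp
  qed
qed

lemma rank_less_card:
  assumes "finite E" "e \<in> E"
  shows "rank f E e < card E"
proof -
  have "rank f E e \<le> card (E - {e})"
    unfolding rank_def using assms by (intro card_mono) auto
  then show ?thesis using card_Diff1_less[OF assms] by linarith
qed

lemma bij_betw_rank:
  assumes fin: "finite E" and inj: "inj_on f E"
  shows "bij_betw (rank f E) E {..<card E}"
proof -
  have inj_rank: "inj_on (rank f E) E"
  proof (rule inj_onI)
    fix x y assume xy: "x \<in> E" "y \<in> E" "rank f E x = rank f E y"
    then have "\<not> f x < f y" "\<not> f y < f x" using rank_less_iff[OF fin] by (metis less_irrefl)+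
    then show "x = y" using inj xy(1,2) by (metis inj_on_def linorder_neqE)
  qed
  have "rank f E ` E \<subseteq> {..<card E}" using rank_less_card[OF fin] by auto
  moreover have "card (rank f E ` E) = card {..<card E}" using card_image[OF inj_rank] by simp
  ultimately show ?thesis
    using inj_rank by (simp add: bij_betw_def card_subset_eq)
qed

lemma interleaving_rank:
  assumes "finite E" "inj_on f E" "e \<in> E"
  shows "interleaving f E lab (rank f E e) = lab e"
  using assms bij_betw_rank bij_betw_imp_inj_on by (metis interleaving_def inv_into_f_f)

lemma interleaving_mem:
  assumes "finite E" "inj_on f E" "i < card E"
  shows "interleaving f E lab i \<in> lab ` E"
  using assms bij_betw_rank[OF assms(1,2)] unfolding interleaving_def
  by (metis bij_betw_imp_surj_on image_eqI inv_into_into lessThan_iff)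

lemma card_interleaving_before:
  assumes fin: "finite E" and inj: "inj_on f E" and e: "e \<in> E"
  shows "card {j. j < rank f E e \<and> interleaving f E lab j = lab e}
    = card {e'\<in>E. lab e' = lab e \<and> f e' < f e}"
proof -
  have bij: "bij_betw (rank f E) E {..<card E}" by (rule bij_betw_rank[OF fin inj])
  have "{j. j < rank f E e \<and> interleaving f E lab j = lab e}
      = rank f E ` {e'\<in>E. lab e' = lab e \<and> f e' < f e}"
  proof (intro equalityI subsetI)
    fix j assume j: "j \<in> {j. j < rank f E e \<and> interleaving f E lab j = lab e}"
    have "j < card E" using j rank_less_card[OF fin e, of f] by auto
    then obtain e' where e': "e' \<in> E" "j = rank f E e'"
      using bij_betw_imp_surj_on[OF bij] by (metis imageE lessThan_iff)
    then show "j \<in> rank f E ` {e'\<in>E. lab e' = lab e \<and> f e' < f e}"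
      using j interleaving_rank[OF fin inj e'(1), of lab] rank_less_iff[OF fin e'(1) e, of f]
      by auto
  next
    fix j assume "j \<in> rank f E ` {e'\<in>E. lab e' = lab e \<and> f e' < f e}"
    then obtain e' where e': "e' \<in> E" "lab e' = lab e" "f e' < f e" "j = rank f E e'" by blast
    then show "j \<in> {j. j < rank f E e \<and> interleaving f E lab j = lab e}"
      using interleaving_rank[OF fin inj e'(1), of lab] rank_less_iff[OF fin e'(1) e, of f] by simp
  qed
  moreover have "inj_on (rank f E) {e'\<in>E. lab e' = lab e \<and> f e' < f e}"
    using bij by (auto simp: bij_betw_def intro: inj_on_subset)
  ultimately show ?thesis by (simp add: card_image)
qed

lemma occurrence_index_unique:
  fixes W :: "nat \<Rightarrow> 'l"
  assumes "W i = v" "W i' = v" "card {j. j < i \<and> W j = v} = card {j. j < i' \<and> W j = v}"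
  shows "i = i'"
proof -
  have less: "card {j. j < a \<and> W j = v} < card {j. j < b \<and> W j = v}"
    if "a < b" "W a = v" for a b
  proof (rule psubset_card_mono)
    have "{j. j < a \<and> W j = v} \<subseteq> {j. j < b \<and> W j = v}" using that(1) by auto
    moreover have "a \<in> {j. j < b \<and> W j = v} - {j. j < a \<and> W j = v}" using that by simp
    ultimately show "{j. j < a \<and> W j = v} \<subset> {j. j < b \<and> W j = v}" by blast
  qed simp
  show ?thesis
    using less[of i i'] less[of i' i] assms by (metis less_irrefl linorder_neqE)
qed

text \<open>A merge of sorted sequences is determined by the pattern in which it takes
  elements from each of them.\<close>
lemma less_iff_of_interleaving_eq:
  assumes fin: "finite E" and inj: "inj_on f E" "inj_on g E"
    and same_label: "\<And>x y. x \<in> E \<Longrightarrow> y \<in> E \<Longrightarrow> lab x = lab y \<Longrightarrow> f x < f y \<longleftrightarrow> g x < g y"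
    and pattern: "\<And>i. i < card E \<Longrightarrow> interleaving f E lab i = interleaving g E lab i"
    and xy: "x \<in> E" "y \<in> E"
  shows "f x < f y \<longleftrightarrow> g x < g y"
proof -
  have "rank f E e = rank g E e" if e: "e \<in> E" for e
  proof (rule occurrence_index_unique[where W = "interleaving f E lab" and v = "lab e"])
    have below: "rank g E e < card E" by (rule rank_less_card[OF fin e])
    have before_eq: "{j. j < rank g E e \<and> interleaving f E lab j = lab e}
        = {j. j < rank g E e \<and> interleaving g E lab j = lab e}"
      using pattern below by fastforce
    have "{e'\<in>E. lab e' = lab e \<and> f e' < f e} = {e'\<in>E. lab e' = lab e \<and> g e' < g e}"
      using same_label e by blast
    then show "card {j. j < rank f E e \<and> interleaving f E lab j = lab e}
        = card {j. j < rank g E e \<and> interleaving f E lab j = lab e}"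
      unfolding before_eq card_interleaving_before[OF fin inj(1) e]
        card_interleaving_before[OF fin inj(2) e] by simp
    show "interleaving f E lab (rank f E e) = lab e" by (rule interleaving_rank[OF fin inj(1) e])
    show "interleaving f E lab (rank g E e) = lab e"
      using pattern[OF below] interleaving_rank[OF fin inj(2) e] by simp
  qed
  then show ?thesis using rank_less_iff[OF fin] xy by metis
qed

section \<open>Encodings\<close>

lemma has_encodingI:
  fixes code :: "'x \<Rightarrow> bool list"
  assumes len: "\<And>x. x \<in> X \<Longrightarrow> real (length (code x)) \<le> s"
    and ans: "\<And>x y q. x \<in> X \<Longrightarrow> y \<in> X \<Longrightarrow> code x = code y \<Longrightarrow> q \<in> Q \<Longrightarrow> ans x q = ans y q"
  shows "has_encoding X Q ans s"
proof -
  define decode where "decode w q = ans (SOME y. y \<in> X \<and> code y = w) q" for w q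
  have "decode (code x) q = ans x q" if x: "x \<in> X" and q: "q \<in> Q" for x q
  proof -
    have "(SOME y. y \<in> X \<and> code y = code x) \<in> X \<and> code (SOME y. y \<in> X \<and> code y = code x) = code x"
      by (rule someI[of _ x]) (simp add: x)
    then show ?thesis unfolding decode_def using ans x q by blast
  qed
  then show ?thesis unfolding has_encoding_def using len by blast
qed

text \<open>Padding to the fixed length \<open>s + 1\<close> makes concatenations of codes uniquely splittable.\<close>
definition pad :: "nat \<Rightarrow> bool list \<Rightarrow> bool list" where
  "pad s w = replicate (s - length w) False @ True # w"

lemma length_pad: "length w \<le> s \<Longrightarrow> length (pad s w) = s + 1"
  by (simp add: pad_def)

lemma pad_inject: "pad s v = pad s w \<Longrightarrow> v = w"
proof -
  have "dropWhile Not (replicate n False @ True # w) = True # w" for n w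
    by (induction n) auto
  then show "pad s v = pad s w \<Longrightarrow> v = w" unfolding pad_def by (metis list.inject)
qed

lemma pad_append_inject:
  assumes "length v \<le> s" "length w \<le> s" "pad s v @ x = pad s w @ y"
  shows "v = w" "x = y"
  using assms length_pad[of v s] length_pad[of w s] pad_inject[of s v w]
  by (auto simp: append_eq_append_conv)

lemma ex_inj_on_bool_lists:
  assumes "finite T" "card T \<le> 2 ^ L"
  shows "\<exists>\<phi> :: 't \<Rightarrow> bool list. inj_on \<phi> T \<and> (\<forall>t\<in>T. length (\<phi> t) = L)"
proof -
  let ?W = "{w :: bool list. length w = L}"
  have "finite ?W" "card ?W = 2 ^ L"
    using finite_lists_length_eq[of "UNIV :: bool set" L] card_lists_length_eq[of "UNIV :: bool set" L]
    by simp_all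
  then obtain \<phi> where "inj_on \<phi> T" "\<phi> ` T \<subseteq> ?W"
    using card_le_inj[OF assms(1)] assms(2) by metis
  then show ?thesis by auto
qed

lemma three_pow_le_two_pow_ceiling: "(3::nat) ^ m \<le> 2 ^ nat \<lceil>real m * log 2 3\<rceil>"
proof -
  define L where "L = nat \<lceil>real m * log 2 3\<rceil>"
  have "real (3 ^ m) = 3 powr real m" by (simp add: powr_realpow)
  also have "\<dots> = (2 powr log 2 3) powr real m" by simp
  also have "\<dots> = 2 powr (real m * log 2 3)" by (subst powr_powr) (simp add: mult.commute)
  also have "\<dots> \<le> 2 powr real L" unfolding L_def by (intro powr_mono) linarith+
  also have "\<dots> = real (2 ^ L)" by (simp add: powr_realpow)
  finally show ?thesis unfolding L_def by linarith
qed

lemma ex_inj_on_ternary_strings: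
  assumes "finite P"
  shows "\<exists>\<phi> :: ('p \<Rightarrow> nat) \<Rightarrow> bool list. inj_on \<phi> (P \<rightarrow>\<^sub>E {0, 1, 2})
    \<and> (\<forall>t \<in> P \<rightarrow>\<^sub>E {0, 1, 2}. length (\<phi> t) = nat \<lceil>real (card P) * log 2 3\<rceil>)"
proof (rule ex_inj_on_bool_lists)
  show "finite (P \<rightarrow>\<^sub>E {0, 1, 2 :: nat})" using assms by (simp add: finite_PiE)
  show "card (P \<rightarrow>\<^sub>E {0, 1, 2 :: nat}) \<le> 2 ^ nat \<lceil>real (card P) * log 2 3\<rceil>"
    using assms three_pow_le_two_pow_ceiling[of "card P"] by (simp add: card_funcsetE numeral_3_eq_3)
qed

section \<open>Two-row arrays\<close>

definition prefix2 :: "nat \<Rightarrow> (nat \<times> nat) set" where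
  "prefix2 b = {1..2} \<times> {1..b}"

definition candidates :: "nat \<Rightarrow> nat \<Rightarrow> (nat \<Rightarrow> nat \<Rightarrow> 'a::linorder) \<Rightarrow> (nat \<times> nat) set" where
  "candidates n k A = (\<Union>b\<in>{1..n}. set (top_k k (case_prod A) (prefix2 b)))"

text \<open>Trit \<open>0\<close> marks the non-candidates; ranking the candidates by position, the candidate
  of rank \<open>i\<close> carries the row of the candidate of \<open>i\<close>-th smallest value.\<close>
definition trits :: "nat \<Rightarrow> nat \<Rightarrow> (nat \<Rightarrow> nat \<Rightarrow> 'a::linorder) \<Rightarrow> nat \<times> nat \<Rightarrow> nat" where
  "trits n k A = restrict (\<lambda>p. if p \<in> candidates n k A
     then interleaving (case_prod A) (candidates n k A) fst (rank id (candidates n k A) p)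
     else 0) (prefix2 n)"

lemma finite_prefix2: "finite (prefix2 b)"
  by (simp add: prefix2_def)

lemma card_prefix2: "card (prefix2 b) = 2 * b"
  by (simp add: prefix2_def card_cartesian_product)

lemma inj_on_prefix2:
  assumes "A \<in> arrays2 2 n" "b \<le> n"
  shows "inj_on (case_prod A) (prefix2 b)"
  using assms unfolding arrays2_def prefix2_def by (auto intro: inj_on_subset)

lemma row_in_arrays1:
  assumes "A \<in> arrays2 2 n" "r \<in> {1, 2}"
  shows "A r \<in> arrays1 n"
  unfolding arrays1_def
proof (rule CollectI, rule inj_onI)
  fix x y assume "x \<in> {1..n}" "y \<in> {1..n}" "A r x = A r y"
  then have "(r, x) = (r, y)"
    using assms unfolding arrays2_def by (intro inj_onD[of "\<lambda>(i, j). A i j"]) auto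
  then show "x = y" by simp
qed

lemma candidates_subset: "candidates n k A \<subseteq> prefix2 n"
  unfolding candidates_def prefix2_def using set_top_k_subset by fastforce

lemma inj_on_candidates: "A \<in> arrays2 2 n \<Longrightarrow> inj_on (case_prod A) (candidates n k A')"
  using inj_on_prefix2[of A n n] candidates_subset by (blast intro: inj_on_subset)

lemma finite_candidates: "finite (candidates n k A)"
  using candidates_subset finite_prefix2 by (rule finite_subset)

lemma candidate_in_row_top_k:
  assumes A: "A \<in> arrays2 2 n" and rc: "(r, c) \<in> candidates n k A"
  shows "r \<in> {1, 2}" "\<exists>b\<in>{1..n}. c \<in> set (top_k k (A r) {1..b})"
proof -
  obtain b where b: "b \<in> {1..n}" "(r, c) \<in> set (top_k k (case_prod A) (prefix2 b))"
    using rc unfolding candidates_def by blast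
  then have rc_in: "(r, c) \<in> {r} \<times> {1..b}" and r: "r \<in> {1, 2}"
    using set_top_k_subset unfolding prefix2_def by fastforce+
  have inj_row: "inj_on (A r) {1..b}"
    using row_in_arrays1[OF A r] b(1) unfolding arrays1_def by (auto intro: inj_on_subset)
  have "{r} \<times> {1..b} \<subseteq> prefix2 b" using r unfolding prefix2_def by auto
  then have "(r, c) \<in> set (top_k k (case_prod A) ({r} \<times> {1..b}))"
    using mem_top_k_subset[OF finite_prefix2 inj_on_prefix2[OF A] _ rc_in b(2)] b(1) by simp
  then show "\<exists>b\<in>{1..n}. c \<in> set (top_k k (A r) {1..b})"
    using b(1) top_k_Times_singleton[of "{1..b}" A r k] inj_row by auto
  show "r \<in> {1, 2}" by (rule r)
qed

lemma trits_candidate: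
  assumes A: "A \<in> arrays2 2 n" and p: "p \<in> candidates n k A"
  shows "trits n k A p \<in> {1, 2}"
proof -
  let ?E = "candidates n k A"
  have inj: "inj_on (case_prod A) ?E" by (rule inj_on_candidates[OF A])
  have "p \<in> prefix2 n" using p candidates_subset by blast
  then have "trits n k A p = interleaving (case_prod A) ?E fst (rank id ?E p)"
    using p by (simp add: trits_def)
  also have "\<dots> \<in> fst ` ?E"
    by (rule interleaving_mem[OF finite_candidates inj rank_less_card[OF finite_candidates p]])
  also have "\<dots> \<subseteq> fst ` prefix2 n" using candidates_subset by (rule image_mono)
  also have "\<dots> \<subseteq> {1, 2}" unfolding prefix2_def by auto
  finally show ?thesis .
qed

lemma candidates_eq_trits:
  assumes "A \<in> arrays2 2 n"
  shows "candidates n k A = {p \<in> prefix2 n. trits n k A p \<noteq> 0}"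
proof (intro equalityI subsetI)
  fix p assume "p \<in> candidates n k A"
  then show "p \<in> {p \<in> prefix2 n. trits n k A p \<noteq> 0}"
    using trits_candidate[OF assms] candidates_subset by fastforce
next
  fix p assume "p \<in> {p \<in> prefix2 n. trits n k A p \<noteq> 0}"
  then show "p \<in> candidates n k A" unfolding trits_def by (auto split: if_splits)
qed

lemma trits_in_funcset:
  assumes "A \<in> arrays2 2 n"
  shows "trits n k A \<in> prefix2 n \<rightarrow>\<^sub>E {0, 1, 2}"
proof -
  have "trits n k A p \<in> {0, 1, 2}" if "p \<in> prefix2 n" for p
    using that trits_candidate[OF assms, of p] by (cases "p \<in> candidates n k A") (auto simp: trits_def)
  moreover have "trits n k A \<in> extensional (prefix2 n)" by (simp add: trits_def)
  ultimately show ?thesis by (simp add: PiE_iff)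
qed

lemma interleaving_eq_of_trits_eq:
  fixes A A' :: "nat \<Rightarrow> nat \<Rightarrow> 'a::linorder"
  assumes A: "A \<in> arrays2 2 n" and A': "A' \<in> arrays2 2 n"
    and eq: "trits n k A = trits n k A'" and i: "i < card (candidates n k A)"
  shows "interleaving (case_prod A) (candidates n k A) fst i
    = interleaving (case_prod A') (candidates n k A) fst i"
proof -
  let ?E = "candidates n k A"
  have E': "candidates n k A' = ?E"
    using candidates_eq_trits[OF A] candidates_eq_trits[OF A'] eq by simp
  have "i \<in> rank id ?E ` ?E"
    using bij_betw_imp_surj_on[OF bij_betw_rank[OF finite_candidates[of n k A] inj_on_id]] i by simp
  then obtain p where p: "p \<in> ?E" "rank id ?E p = i" by blast
  have "p \<in> prefix2 n" using p(1) candidates_subset by blast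
  then show ?thesis
    using fun_cong[OF eq, of p] p E' by (simp add: trits_def)
qed

lemma less_iff_of_same_row_candidates:
  fixes A A' :: "nat \<Rightarrow> nat \<Rightarrow> 'a::linorder"
  assumes A: "A \<in> arrays2 2 n" and A': "A' \<in> arrays2 2 n"
    and rows: "\<And>r j. r \<in> {1, 2} \<Longrightarrow> j \<in> {1..n} \<Longrightarrow> top_k k (A r) {1..j} = top_k k (A' r) {1..j}"
    and x: "x \<in> candidates n k A" and y: "y \<in> candidates n k A" and same: "fst x = fst y"
  shows "case_prod A x < case_prod A y \<longleftrightarrow> case_prod A' x < case_prod A' y"
proof -
  obtain r c c' where xy: "x = (r, c)" "y = (r, c')" using same by (metis prod.collapse)
  then have r: "r \<in> {1, 2}" using candidate_in_row_top_k(1)[OF A] x by blast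
  obtain b b' where "b \<in> {1..n}" "c \<in> set (top_k k (A r) {1..b})"
    "b' \<in> {1..n}" "c' \<in> set (top_k k (A r) {1..b'})"
    using candidate_in_row_top_k(2)[OF A] x y xy by metis
  moreover have "inj_on (A r) {1..n}" "inj_on (A' r) {1..n}"
    using row_in_arrays1[OF A r] row_in_arrays1[OF A' r] unfolding arrays1_def by simp_all
  ultimately show ?thesis
    using less_iff_of_prefix_top_k_eq[of "A r" n "A' r" k] rows[OF r] xy by simp
qed

lemma top_k_prefix2_eq:
  fixes A A' :: "nat \<Rightarrow> nat \<Rightarrow> 'a::linorder"
  assumes A: "A \<in> arrays2 2 n" and A': "A' \<in> arrays2 2 n"
    and rows: "\<And>r j. r \<in> {1, 2} \<Longrightarrow> j \<in> {1..n} \<Longrightarrow> top_k k (A r) {1..j} = top_k k (A' r) {1..j}"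
    and eq: "trits n k A = trits n k A'"
    and b: "b \<in> {1..n}"
  shows "top_k k (case_prod A) (prefix2 b) = top_k k (case_prod A') (prefix2 b)"
proof -
  let ?E = "candidates n k A"
  have E': "candidates n k A' = ?E"
    using candidates_eq_trits[OF A] candidates_eq_trits[OF A'] eq by simp
  have inj: "inj_on (case_prod A) ?E" "inj_on (case_prod A') ?E"
    using inj_on_candidates[OF A] inj_on_candidates[OF A'] by blast+
  have less_iff: "case_prod A x < case_prod A y \<longleftrightarrow> case_prod A' x < case_prod A' y"
    if "x \<in> ?E" "y \<in> ?E" for x y
    using less_iff_of_interleaving_eq[OF finite_candidates inj
        less_iff_of_same_row_candidates[OF A A' rows]
        interleaving_eq_of_trits_eq[OF A A' eq] that] .
  have inj_b: "inj_on (case_prod A) (prefix2 b)" "inj_on (case_prod A') (prefix2 b)"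
    using inj_on_prefix2[OF A] inj_on_prefix2[OF A'] b by auto
  have top_sub: "set (top_k k (case_prod B) (prefix2 b)) \<subseteq> prefix2 b \<inter> candidates n k B" for B
    using set_top_k_subset b unfolding candidates_def by blast
  have "top_k k (case_prod A) (prefix2 b) = top_k k (case_prod A) (prefix2 b \<inter> ?E)"
    using top_k_subset_eq[OF finite_prefix2 inj_b(1) top_sub] by simp
  also have "\<dots> = top_k k (case_prod A') (prefix2 b \<inter> ?E)"
    using finite_prefix2 inj_b less_iff by (intro top_k_cong) (auto intro: inj_on_subset)
  also have "\<dots> = top_k k (case_prod A') (prefix2 b)"
    using top_k_subset_eq[OF finite_prefix2 inj_b(2) top_sub] E' by simp
  finally show ?thesis .
qed

lemma top_k_three_sided_eq:
  fixes A A' :: "nat \<Rightarrow> nat \<Rightarrow> 'a::linorder"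
  assumes A: "A \<in> arrays2 2 n" and A': "A' \<in> arrays2 2 n"
    and rows: "\<And>r j. r \<in> {1, 2} \<Longrightarrow> j \<in> {1..n} \<Longrightarrow> top_k k (A r) {1..j} = top_k k (A' r) {1..j}"
    and eq: "trits n k A = trits n k A'"
    and q: "1 \<le> i" "i \<le> j" "j \<le> 2" "b \<in> {1..n}"
  shows "top_k k (case_prod A) ({i..j} \<times> {1..b}) = top_k k (case_prod A') ({i..j} \<times> {1..b})"
proof (cases "i = j")
  case True
  then have i: "i \<in> {1, 2}" and ij: "{i..j} = {i}" using q by auto
  have inj: "inj_on (A i) {1..b}" "inj_on (A' i) {1..b}"
    using row_in_arrays1[OF A i] row_in_arrays1[OF A' i] q(4)
    unfolding arrays1_def by (auto intro: inj_on_subset)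
  have "top_k k (case_prod A) ({i..j} \<times> {1..b}) = map (Pair i) (top_k k (A i) {1..b})"
    unfolding ij using top_k_Times_singleton[of "{1..b}" A i k] inj(1) by simp
  also have "\<dots> = map (Pair i) (top_k k (A' i) {1..b})" using rows[OF i q(4)] by simp
  also have "\<dots> = top_k k (case_prod A') ({i..j} \<times> {1..b})"
    unfolding ij using top_k_Times_singleton[of "{1..b}" A' i k] inj(2) by simp
  finally show ?thesis .
next
  case False
  then have "i = 1" "j = 2" using q(1-3) by linarith+
  then have "{i..j} \<times> {1..b} = prefix2 b" unfolding prefix2_def by simp
  then show ?thesis using top_k_prefix2_eq[OF A A' rows eq q(4)] by simp
qed

lemma enc_3sided_two_rows:
  assumes "enc_1sided n k (real s) TYPE('a::linorder)"
  shows "enc_3sided 2 n k (2 * real s + real_of_int \<lceil>2 * real n * log 2 3\<rceil> + 2) TYPE('a)"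
proof -
  obtain code1 :: "(nat \<Rightarrow> 'a) \<Rightarrow> bool list" and decode1 :: "bool list \<Rightarrow> nat \<Rightarrow> nat list"
    where enc1: "\<forall>B\<in>arrays1 n. real (length (code1 B)) \<le> real s
      \<and> (\<forall>j\<in>{1..n}. decode1 (code1 B) j = top_k k B {1..j})"
    using assms unfolding enc_1sided_def has_encoding_def by blast
  define L where "L = nat \<lceil>2 * real n * log 2 3\<rceil>"
  define T where "T = prefix2 n \<rightarrow>\<^sub>E {0, 1, 2 :: nat}"
  obtain \<phi> :: "(nat \<times> nat \<Rightarrow> nat) \<Rightarrow> bool list" where \<phi>: "inj_on \<phi> T" "\<forall>t\<in>T. length (\<phi> t) = L"
    using ex_inj_on_ternary_strings[OF finite_prefix2, of n]
    unfolding T_def L_def card_prefix2 by auto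
  define code :: "(nat \<Rightarrow> nat \<Rightarrow> 'a) \<Rightarrow> bool list" where
    "code A = pad s (code1 (A 1)) @ pad s (code1 (A 2)) @ \<phi> (trits n k A)" for A
  have trits_T: "trits n k A \<in> T" if "A \<in> arrays2 2 n" for A :: "nat \<Rightarrow> nat \<Rightarrow> 'a"
    using trits_in_funcset[OF that] by (simp add: T_def)
  have len_rows: "length (code1 (A r)) \<le> s" if "A \<in> arrays2 2 n" "r \<in> {1, 2}" for A r
    using enc1 row_in_arrays1[OF that] by auto
  show ?thesis
    unfolding enc_3sided_def
  proof (rule has_encodingI[where code = code])
    fix A :: "nat \<Rightarrow> nat \<Rightarrow> 'a" assume A: "A \<in> arrays2 2 n"
    have "length (code A) = 2 * (s + 1) + L"
      using length_pad len_rows[OF A] \<phi>(2) trits_T[OF A] by (simp add: code_def)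
    moreover have "real L = real_of_int \<lceil>2 * real n * log 2 3\<rceil>" by (simp add: L_def)
    ultimately show "real (length (code A)) \<le> 2 * real s + real_of_int \<lceil>2 * real n * log 2 3\<rceil> + 2"
      by simp
  next
    fix A A' :: "nat \<Rightarrow> nat \<Rightarrow> 'a" and q :: "nat \<times> nat \<times> nat"
    assume A: "A \<in> arrays2 2 n" and A': "A' \<in> arrays2 2 n" and code_eq: "code A = code A'"
      and q: "q \<in> {(i, j, b). 1 \<le> i \<and> i \<le> j \<and> j \<le> 2 \<and> 1 \<le> b \<and> b \<le> n}"
    have rows12: "1 \<in> {1, 2::nat}" "2 \<in> {1, 2::nat}" by simp_all
    note row1 = pad_append_inject[OF len_rows[OF A rows12(1)] len_rows[OF A' rows12(1)]
        code_eq[unfolded code_def]]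
    note row2 = pad_append_inject[OF len_rows[OF A rows12(2)] len_rows[OF A' rows12(2)] row1(2)]
    have trits_eq: "trits n k A = trits n k A'"
      using inj_onD[OF \<phi>(1) row2(2) trits_T[OF A] trits_T[OF A']] .
    have code1_eq: "code1 (A r) = code1 (A' r)" if "r \<in> {1, 2}" for r
      using that row1(1) row2(1) by auto
    have rows: "top_k k (A r) {1..j} = top_k k (A' r) {1..j}" if "r \<in> {1, 2}" "j \<in> {1..n}" for r j
      using enc1 row_in_arrays1[OF A that(1)] row_in_arrays1[OF A' that(1)] code1_eq[OF that(1)] that(2)
      by metis
    obtain i j b where "q = (i, j, b)" "1 \<le> i" "i \<le> j" "j \<le> 2" "b \<in> {1..n}" using q by auto
    then show "(\<lambda>(i, j, b). top_k k (\<lambda>(r, c). A r c) ({i..j} \<times> {1..b})) q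
      = (\<lambda>(i, j, b). top_k k (\<lambda>(r, c). A' r c) ({i..j} \<times> {1..b})) q"
      using top_k_three_sided_eq[OF A A' rows trits_eq] by simp
  qed
qed

theorem theorem3:
  "\<exists>g :: nat \<Rightarrow> real. g \<in> o(\<lambda>n. real n) \<and>
     (\<forall>(S :: nat \<Rightarrow> nat \<Rightarrow> nat) n k. 1 \<le> n \<longrightarrow> 1 < k \<longrightarrow> k \<le> 2 * n \<longrightarrow>
        enc_1sided n k (real (S n k)) TYPE('a::linorder) \<longrightarrow>
        enc_3sided 2 n k (2 * real (S n k) + real_of_int \<lceil>2 * real n * log 2 3\<rceil> + g n)
          TYPE('a))"
proof (intro exI conjI allI impI)
  show "(\<lambda>_. 2) \<in> o(\<lambda>n. real n)" by real_asymp
  fix S :: "nat \<Rightarrow> nat \<Rightarrow> nat" and n k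
  assume "enc_1sided n k (real (S n k)) TYPE('a)"
  then show "enc_3sided 2 n k (2 * real (S n k) + real_of_int \<lceil>2 * real n * log 2 3\<rceil> + 2) TYPE('a)"
    by (rule enc_3sided_two_rows)
qed

end
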